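(* Let $q>0$ and $k\in\mathbb{Z}$. A cochain $c\in C^q(\mathfrak{X}(\mathbb{R}^n))$ lies in $F^kC^q(\mathfrak{X}(\mathbb{R}^n))$ if and only if for all homogeneous polynomial vector fields $X_1,\dots,X_q\in\mathfrak{X}_{\mathrm{pol}}(\mathbb{R}^n)$ with $\sum_{i=1}^q\deg X_i<k$ we have $c(X_1,\dots,X_q)=0$.
   Context: $C^q(\mathfrak{X}(\mathbb{R}^n))$: continuous multilinear skew-symmetric maps $\mathfrak{X}(\mathbb{R}^n)^q\to\mathbb{R}$, $\mathfrak{X}(\mathbb{R}^n)$ with Fréchet topology. For $t>0$, $T_t(x)=tx$, $T_t^*X=\frac1t(X\circ T_t)$, and $(T_t^*c)(X_1,\dots,X_q)=c(T_t^*X_1,\dots,T_t^*X_q)$. $F^kC^q(\mathfrak{X}(\mathbb{R}^n))$ is the set of $c$ such that $\lim_{t\to0}t^{-k}(T_t^*c)(X_1,\dots,X_q)$ exists for all $X_i\in\mathfrak{X}(\mathbb{R}^n)$. $\mathfrak{X}_{\mathrm{pol}}(\mathbb{R}^n)$ is the space of vector fields $\sum_if_i\partial_i$ with polynomial coefficients; $X$ is homogeneous of degree $d$ if $T_t^*X=t^dX$ for all $t>0$ (equivalently its coefficients are homogeneous polynomials of degree $d+1$). *)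

theory Defs
  imports "HOL-Analysis.Analysis"
begin

definition pderiv_vf :: "'n::finite \<Rightarrow> (real^'n \<Rightarrow> real^'n) \<Rightarrow> (real^'n \<Rightarrow> real^'n)" where
  "pderiv_vf i X = (\<lambda>x. frechet_derivative X (at x) (axis i 1))"

fun Dlist :: "'n::finite list \<Rightarrow> (real^'n \<Rightarrow> real^'n) \<Rightarrow> (real^'n \<Rightarrow> real^'n)" where
  "Dlist [] X = X"
| "Dlist (i # is) X = pderiv_vf i (Dlist is X)"

definition smooth_vf :: "(real^'n::finite \<Rightarrow> real^'n) \<Rightarrow> bool" where
  "smooth_vf X \<longleftrightarrow> (\<forall>is x. Dlist is X differentiable (at x))"

text \<open>Convergence in the Fr\'echet (C^\<infinity>, compact-open) topology: every partial derivative
  converges uniformly on every compact set.\<close>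
definition vf_conv :: "(nat \<Rightarrow> real^'n::finite \<Rightarrow> real^'n) \<Rightarrow> (real^'n \<Rightarrow> real^'n) \<Rightarrow> bool" where
  "vf_conv Y X \<longleftrightarrow> (\<forall>is K. compact K \<longrightarrow>
      uniform_limit K (\<lambda>j. Dlist is (Y j)) (Dlist is X) sequentially)"

text \<open>q-cochains: a cochain takes a q-tuple (indexed by 0..<q) of vector fields.
  Continuity is sequential continuity (the Fr\'echet space is metrizable).\<close>
definition cochain :: "nat \<Rightarrow> ((nat \<Rightarrow> real^'n::finite \<Rightarrow> real^'n) \<Rightarrow> real) \<Rightarrow> bool" where
  "cochain q c \<longleftrightarrow>
     (\<forall>Xs Ys. (\<forall>i<q. Xs i = Ys i) \<longrightarrow> c Xs = c Ys)
   \<and> (\<forall>Xs i Y Z a b. (\<forall>l<q. smooth_vf (Xs l)) \<and> i < q \<and> smooth_vf Y \<and> smooth_vf Z \<longrightarrow>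
        c (Xs(i := (\<lambda>x. a *\<^sub>R Y x + b *\<^sub>R Z x))) = a * c (Xs(i := Y)) + b * c (Xs(i := Z)))
   \<and> (\<forall>Xs i j. (\<forall>l<q. smooth_vf (Xs l)) \<and> i < q \<and> j < q \<and> i \<noteq> j \<longrightarrow>
        c (Xs(i := Xs j, j := Xs i)) = - c Xs)
   \<and> (\<forall>Ys Xs. (\<forall>l<q. smooth_vf (Xs l) \<and> (\<forall>m. smooth_vf (Ys m l)) \<and> vf_conv (\<lambda>m. Ys m l) (Xs l)) \<longrightarrow>
        (\<lambda>m. c (Ys m)) \<longlonglongrightarrow> c Xs)"

definition pull_vf :: "real \<Rightarrow> (real^'n::finite \<Rightarrow> real^'n) \<Rightarrow> (real^'n \<Rightarrow> real^'n)" where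
  "pull_vf t X = (\<lambda>x. (1 / t) *\<^sub>R X (t *\<^sub>R x))"

definition pull_cochain :: "real \<Rightarrow> ((nat \<Rightarrow> real^'n::finite \<Rightarrow> real^'n) \<Rightarrow> real)
      \<Rightarrow> ((nat \<Rightarrow> real^'n \<Rightarrow> real^'n) \<Rightarrow> real)" where
  "pull_cochain t c = (\<lambda>Xs. c (\<lambda>i. pull_vf t (Xs i)))"

definition filt :: "int \<Rightarrow> nat \<Rightarrow> ((nat \<Rightarrow> real^'n::finite \<Rightarrow> real^'n) \<Rightarrow> real) \<Rightarrow> bool" where
  "filt k q c \<longleftrightarrow> cochain q c \<and>
     (\<forall>Xs. (\<forall>i<q. smooth_vf (Xs i)) \<longrightarrow>
        (\<exists>L. ((\<lambda>t. t powr (- of_int k) * pull_cochain t c Xs) \<longlongrightarrow> L) (at_right 0)))"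

definition poly_fun :: "(real^'n::finite \<Rightarrow> real) \<Rightarrow> bool" where
  "poly_fun f \<longleftrightarrow> (\<exists>A :: ('n \<Rightarrow> nat) set. \<exists>a. finite A \<and>
      f = (\<lambda>x. \<Sum>\<alpha>\<in>A. a \<alpha> * (\<Prod>i\<in>UNIV. (x $ i) ^ (\<alpha> i))))"

definition poly_vf :: "(real^'n::finite \<Rightarrow> real^'n) \<Rightarrow> bool" where
  "poly_vf X \<longleftrightarrow> (\<forall>j. poly_fun (\<lambda>x. X x $ j))"

definition homog_vf :: "int \<Rightarrow> (real^'n::finite \<Rightarrow> real^'n) \<Rightarrow> bool" where
  "homog_vf d X \<longleftrightarrow> (\<forall>t>0. pull_vf t X = (\<lambda>x. (t powr of_int d) *\<^sub>R X x))"

end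

theory Submission
  imports Defs
begin

text \<open>If the \<open>X\<^sub>i\<close> are homogeneous polynomial fields of degrees \<open>d\<^sub>i\<close>, multilinearity gives
  \<open>T\<^sub>t\<^sup>* c (X) = t\<^bsup>d\<^esup> c (X)\<close> with \<open>d = \<Sum> d\<^sub>i\<close>, so the limit defining \<open>F\<^sup>k\<close> can only exist
  for \<open>d < k\<close> if \<open>c (X) = 0\<close>. Conversely, for smooth \<open>X\<^sub>i\<close> put \<open>P t = c (X\<^sub>1 (t \<cdot>), \<dots>, X\<^sub>q (t \<cdot>))\<close>,
  so that \<open>T\<^sub>t\<^sup>* c (X) = t\<^bsup>-q\<^esup> P t\<close>. The dilation curves \<open>t \<mapsto> X\<^sub>i (t \<cdot>)\<close> are smooth in the
  Frechet topology, hence continuity and multilinearity of \<open>c\<close> make \<open>P\<close> smooth, and \<open>P\<^bsup>(m)\<^esup> 0\<close> is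
  a sum of values of \<open>c\<close> on Taylor terms of the \<open>X\<^sub>i\<close> at the origin, i.e. on homogeneous
  polynomial fields of total degree \<open>m - q\<close>. These vanish for \<open>m < k + q\<close>, so by Taylor's formula
  \<open>t\<^bsup>-k\<^esup> T\<^sub>t\<^sup>* c (X) = t\<^bsup>-k-q\<^esup> P t\<close> converges to \<open>P\<^bsup>(k+q)\<^esup> 0 / (k + q)!\<close>.\<close>

section \<open>Partial derivatives and smooth maps\<close>

definition partial_deriv :: "'n::finite \<Rightarrow> (real^'n \<Rightarrow> 'b::real_normed_vector) \<Rightarrow> real^'n \<Rightarrow> 'b" where
  "partial_deriv i f = (\<lambda>x. frechet_derivative f (at x) (axis i 1))"

fun iter_partial :: "'n::finite list \<Rightarrow> (real^'n \<Rightarrow> 'b::real_normed_vector) \<Rightarrow> real^'n \<Rightarrow> 'b" where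
  "iter_partial [] f = f"
| "iter_partial (i # is) f = partial_deriv i (iter_partial is f)"

definition smooth_map :: "(real^'n::finite \<Rightarrow> 'b::real_normed_vector) \<Rightarrow> bool" where
  "smooth_map f \<longleftrightarrow> (\<forall>is x. iter_partial is f differentiable (at x))"

definition smooth_upto :: "nat \<Rightarrow> (real^'n::finite \<Rightarrow> 'b::real_normed_vector) \<Rightarrow> bool" where
  "smooth_upto N f \<longleftrightarrow> (\<forall>is x. length is \<le> N \<longrightarrow> iter_partial is f differentiable (at x))"

lemma Dlist_eq_iter_partial: "Dlist is X = iter_partial is X"
  by (induction "is") (auto simp: pderiv_vf_def partial_deriv_def)

lemma smooth_vf_iff_smooth_map: "smooth_vf X \<longleftrightarrow> smooth_map X"
  by (simp add: smooth_vf_def smooth_map_def Dlist_eq_iter_partial)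

lemma vf_conv_iff_iter_partial:
  "vf_conv Y X \<longleftrightarrow> (\<forall>is K. compact K \<longrightarrow> uniform_limit K (\<lambda>j. iter_partial is (Y j)) (iter_partial is X) sequentially)"
  by (simp add: vf_conv_def Dlist_eq_iter_partial)

lemma smooth_map_differentiable: "smooth_map f \<Longrightarrow> f differentiable (at x)"
  unfolding smooth_map_def by (metis iter_partial.simps(1))

lemma smooth_map_imp_smooth_upto: "smooth_map f \<Longrightarrow> smooth_upto N f"
  by (simp add: smooth_map_def smooth_upto_def)

lemma smooth_map_iff_smooth_upto: "smooth_map f \<longleftrightarrow> (\<forall>N. smooth_upto N f)"
  unfolding smooth_map_def smooth_upto_def by (meson order_refl)

lemma iter_partial_append: "iter_partial (is @ js) f = iter_partial is (iter_partial js f)"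
  by (induction "is") auto

lemma smooth_map_iter_partial: "smooth_map f \<Longrightarrow> smooth_map (iter_partial js f)"
  unfolding smooth_map_def by (metis iter_partial_append)

lemma partial_deriv_eq: "(f has_derivative L) (at x) \<Longrightarrow> partial_deriv i f x = L (axis i 1)"
  by (simp add: partial_deriv_def frechet_derivative_at[symmetric])

lemma has_derivative_partials:
  fixes f :: "real^'n::finite \<Rightarrow> 'b::real_normed_vector"
  assumes "f differentiable (at y)"
  shows "(f has_derivative (\<lambda>v. \<Sum>j\<in>UNIV. v$j *\<^sub>R partial_deriv j f y)) (at y)"
proof -
  let ?L = "frechet_derivative f (at y)"
  have L: "(f has_derivative ?L) (at y)"
    using assms frechet_derivative_works by blast
  have "?L v = (\<Sum>j\<in>UNIV. v$j *\<^sub>R partial_deriv j f y)" for v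
  proof -
    have "?L v = ?L (\<Sum>j\<in>UNIV. v$j *\<^sub>R axis j 1)"
      by (metis (no_types) basis_expansion scalar_mult_eq_scaleR sum.cong)
    also have "\<dots> = (\<Sum>j\<in>UNIV. v$j *\<^sub>R ?L (axis j 1))"
      using has_derivative_linear[OF L] by (simp add: linear_sum linear_scale)
    finally show ?thesis by (simp add: partial_deriv_eq[OF L])
  qed
  then have "?L = (\<lambda>v. \<Sum>j\<in>UNIV. v$j *\<^sub>R partial_deriv j f y)" by (rule ext)
  with L show ?thesis by simp
qed

lemma sum_axis_scaleR:
  fixes v :: "'n::finite \<Rightarrow> 'b::real_vector"
  shows "(\<Sum>i\<in>UNIV. (axis j 1 :: real^'n) $ i *\<^sub>R v i) = v j"
proof -
  have "(\<Sum>i\<in>UNIV. (axis j 1 :: real^'n) $ i *\<^sub>R v i) = (\<Sum>i\<in>UNIV. if i = j then v i else 0)"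
    by (rule sum.cong) (auto simp: axis_def)
  then show ?thesis by simp
qed

lemma partial_deriv_linear:
  assumes "bounded_linear L" "\<And>x. f differentiable (at x)"
  shows "partial_deriv i (\<lambda>x. L (f x)) = (\<lambda>x. L (partial_deriv i f x))"
proof
  fix x
  have "((\<lambda>x. L (f x)) has_derivative (\<lambda>v. L (frechet_derivative f (at x) v))) (at x)"
    using assms by (simp add: bounded_linear.has_derivative frechet_derivative_works[symmetric])
  from partial_deriv_eq[OF this] show "partial_deriv i (\<lambda>x. L (f x)) x = L (partial_deriv i f x)"
    by (simp add: partial_deriv_def)
qed

lemma iter_partial_linear:
  assumes "bounded_linear L" "smooth_map f"
  shows "iter_partial is (\<lambda>x. L (f x)) = (\<lambda>x. L (iter_partial is f x))"
  by (induction "is")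
    (simp_all add: partial_deriv_linear assms smooth_map_differentiable[OF smooth_map_iter_partial])

lemma smooth_map_linear:
  assumes "bounded_linear L" "smooth_map f"
  shows "smooth_map (\<lambda>x. L (f x))"
  unfolding smooth_map_def iter_partial_linear[OF assms]
  using assms smooth_map_differentiable[OF smooth_map_iter_partial]
  by (auto intro: differentiable_compose[of L, unfolded o_def] bounded_linear_imp_differentiable)

lemma partial_deriv_add:
  assumes "\<And>x. f differentiable (at x)" "\<And>x. g differentiable (at x)"
  shows "partial_deriv i (\<lambda>x. f x + g x) = (\<lambda>x. partial_deriv i f x + partial_deriv i g x)"
proof
  fix x
  have "((\<lambda>x. f x + g x) has_derivative
          (\<lambda>v. frechet_derivative f (at x) v + frechet_derivative g (at x) v)) (at x)"
    using assms by (simp add: has_derivative_add frechet_derivative_works[symmetric])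
  from partial_deriv_eq[OF this] show "partial_deriv i (\<lambda>x. f x + g x) x = partial_deriv i f x + partial_deriv i g x"
    by (simp add: partial_deriv_def)
qed

lemma iter_partial_add:
  assumes "smooth_upto N f" "smooth_upto N g" "length is \<le> Suc N"
  shows "iter_partial is (\<lambda>x. f x + g x) = (\<lambda>x. iter_partial is f x + iter_partial is g x)"
  using assms(3)
proof (induction "is")
  case (Cons i "is")
  then show ?case
    using assms(1,2) by (simp add: partial_deriv_add smooth_upto_def)
qed simp

lemma smooth_upto_add:
  assumes "smooth_upto N f" "smooth_upto N g"
  shows "smooth_upto N (\<lambda>x. f x + g x)"
  using assms iter_partial_add[OF assms] by (auto simp: smooth_upto_def)

lemma smooth_map_add: "smooth_map f \<Longrightarrow> smooth_map g \<Longrightarrow> smooth_map (\<lambda>x. f x + g x)"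
  by (simp add: smooth_map_iff_smooth_upto smooth_upto_add)

lemma iter_partial_add_smooth:
  "smooth_map f \<Longrightarrow> smooth_map g \<Longrightarrow> iter_partial is (\<lambda>x. f x + g x) = (\<lambda>x. iter_partial is f x + iter_partial is g x)"
  by (rule iter_partial_add[where N = "length is"]) (simp_all add: smooth_map_imp_smooth_upto)

lemma partial_deriv_bilinear:
  assumes "bounded_bilinear bp" "\<And>x. f differentiable (at x)" "\<And>x. g differentiable (at x)"
  shows "partial_deriv i (\<lambda>x. bp (f x) (g x)) = (\<lambda>x. bp (partial_deriv i f x) (g x) + bp (f x) (partial_deriv i g x))"
proof
  fix x
  have "((\<lambda>x. bp (f x) (g x)) has_derivative
     (\<lambda>v. bp (f x) (frechet_derivative g (at x) v) + bp (frechet_derivative f (at x) v) (g x))) (at x)"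
    using assms by (simp add: bounded_bilinear.FDERIV frechet_derivative_works[symmetric])
  from partial_deriv_eq[OF this]
  show "partial_deriv i (\<lambda>x. bp (f x) (g x)) x = bp (partial_deriv i f x) (g x) + bp (f x) (partial_deriv i g x)"
    by (simp add: partial_deriv_def add.commute)
qed

lemma differentiable_bilinear:
  assumes "bounded_bilinear bp" "f differentiable (at x)" "g differentiable (at x)"
  shows "(\<lambda>x. bp (f x) (g x)) differentiable (at x)"
  using bounded_bilinear.FDERIV[OF assms(1)] assms(2,3) unfolding differentiable_def by blast

text \<open>The product rule turns a derivative of order \<open>N + 1\<close> of \<open>bp f g\<close> into derivatives of order
  \<open>N\<close> of products of smooth maps, hence the induction on \<open>N\<close> for all \<open>f\<close>, \<open>g\<close> at once.\<close>

lemma smooth_upto_bilinear: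
  fixes f :: "real^'n::finite \<Rightarrow> 'a::real_normed_vector" and g :: "real^'n \<Rightarrow> 'b::real_normed_vector"
  assumes "bounded_bilinear bp"
  shows "smooth_map f \<Longrightarrow> smooth_map g \<Longrightarrow> smooth_upto N (\<lambda>x. bp (f x) (g x))"
proof (induction N arbitrary: f g)
  case 0
  then show ?case
    by (simp add: smooth_upto_def differentiable_bilinear[OF assms] smooth_map_differentiable)
next
  case (Suc N)
  show ?case unfolding smooth_upto_def
  proof (intro allI impI)
    fix "is" :: "'n list" and x assume len: "length is \<le> Suc N"
    show "iter_partial is (\<lambda>x. bp (f x) (g x)) differentiable (at x)"
    proof (cases "is" rule: rev_exhaust)
      case Nil
      then show ?thesis
        using Suc.prems by (simp add: differentiable_bilinear[OF assms] smooth_map_differentiable)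
    next
      case (snoc js j)
      let ?A = "\<lambda>x. bp (partial_deriv j f x) (g x)" and ?B = "\<lambda>x. bp (f x) (partial_deriv j g x)"
      have df: "\<And>x. f differentiable (at x)" "\<And>x. g differentiable (at x)"
        using Suc.prems smooth_map_differentiable by blast+
      have AB: "smooth_upto N ?A" "smooth_upto N ?B"
        using Suc smooth_map_iter_partial[of _ "[j]"] by auto
      have "iter_partial is (\<lambda>x. bp (f x) (g x)) = iter_partial js (\<lambda>x. ?A x + ?B x)"
        using snoc by (simp add: iter_partial_append partial_deriv_bilinear[OF assms df])
      also have "\<dots> = (\<lambda>x. iter_partial js ?A x + iter_partial js ?B x)"
        using iter_partial_add[OF AB] len snoc by simp
      finally show ?thesis
        using AB len snoc unfolding smooth_upto_def by simp
    qed
  qed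
qed

lemma smooth_map_bilinear:
  "bounded_bilinear bp \<Longrightarrow> smooth_map f \<Longrightarrow> smooth_map g \<Longrightarrow> smooth_map (\<lambda>x. bp (f x) (g x))"
  by (simp add: smooth_map_iff_smooth_upto smooth_upto_bilinear)

lemma partial_deriv_const: "partial_deriv i (\<lambda>x. c) = (\<lambda>x. 0)"
  by (simp add: fun_eq_iff partial_deriv_eq[OF has_derivative_const])

lemma iter_partial_const: "iter_partial is (\<lambda>x. c) = (if is = [] then (\<lambda>x. c) else (\<lambda>x. 0))"
  by (induction "is") (auto simp: partial_deriv_const)

lemma smooth_map_const: "smooth_map (\<lambda>x. c)"
  unfolding smooth_map_def by (simp add: iter_partial_const)

lemma smooth_map_bounded_linear:
  fixes L :: "real^'n::finite \<Rightarrow> 'b::real_normed_vector"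
  assumes "bounded_linear L"
  shows "smooth_map L"
  unfolding smooth_map_def
proof (intro allI)
  fix "is" :: "'n list" and x show "iter_partial is L differentiable (at x)"
  proof (cases "is" rule: rev_exhaust)
    case Nil then show ?thesis using assms by (simp add: bounded_linear_imp_differentiable)
  next
    case (snoc js j)
    have "partial_deriv j L = (\<lambda>x. L (axis j 1))"
      using bounded_linear.has_derivative[OF assms has_derivative_ident]
      by (simp add: fun_eq_iff partial_deriv_eq)
    then show ?thesis using snoc by (simp add: iter_partial_append iter_partial_const)
  qed
qed

lemma smooth_map_scaleR: "smooth_map f \<Longrightarrow> smooth_map (\<lambda>x. a *\<^sub>R f x)"
  using smooth_map_linear[OF bounded_linear_scaleR_right] .

lemma smooth_map_lincomb:
  "smooth_map f \<Longrightarrow> smooth_map g \<Longrightarrow> smooth_map (\<lambda>x. a *\<^sub>R f x + b *\<^sub>R g x)"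
  by (simp add: smooth_map_add smooth_map_scaleR)

lemma iter_partial_lincomb:
  assumes "smooth_map f" "smooth_map g"
  shows "iter_partial is (\<lambda>x. a *\<^sub>R f x + b *\<^sub>R g x) = (\<lambda>x. a *\<^sub>R iter_partial is f x + b *\<^sub>R iter_partial is g x)"
  using assms by (simp add: iter_partial_add_smooth smooth_map_scaleR
      iter_partial_linear[OF bounded_linear_scaleR_right])

lemma smooth_map_sum:
  "finite A \<Longrightarrow> (\<And>a. a \<in> A \<Longrightarrow> smooth_map (f a)) \<Longrightarrow> smooth_map (\<lambda>x. \<Sum>a\<in>A. f a x)"
  by (induction A rule: finite_induct) (simp_all add: smooth_map_add smooth_map_const)

lemma smooth_map_prod:
  "finite A \<Longrightarrow> (\<And>a. a \<in> A \<Longrightarrow> smooth_map (f a)) \<Longrightarrow> smooth_map (\<lambda>x. \<Prod>a\<in>A. (f a x :: real))"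
  by (induction A rule: finite_induct)
    (simp_all add: smooth_map_bilinear[OF bounded_bilinear_mult] smooth_map_const)

lemma smooth_map_power: "smooth_map f \<Longrightarrow> smooth_map (\<lambda>x. (f x :: real) ^ n)"
  by (induction n) (simp_all add: smooth_map_bilinear[OF bounded_bilinear_mult] smooth_map_const)

section \<open>Uniform convergence on compact sets\<close>

lemma uniformly_continuous_in_parameter:
  fixes G :: "real \<Rightarrow> 'a::heine_borel \<Rightarrow> 'b::real_normed_vector"
  assumes cont: "continuous_on UNIV (\<lambda>p. G (fst p) (snd p))" and K: "compact K" and e: "e > 0"
  shows "\<exists>d>0. \<forall>x\<in>K. \<forall>\<sigma>. \<bar>\<sigma> - s\<bar> < d \<longrightarrow> dist (G \<sigma> x) (G s x) < e"
proof -
  have "uniformly_continuous_on (cball s 1 \<times> K) (\<lambda>p. G (fst p) (snd p))"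
    by (rule compact_uniformly_continuous[OF continuous_on_subset[OF cont]]) (auto intro: compact_Times K)
  then obtain d where d: "d > 0" and dd: "\<forall>p\<in>cball s 1 \<times> K. \<forall>p'\<in>cball s 1 \<times> K. dist p' p < d \<longrightarrow>
      dist (G (fst p') (snd p')) (G (fst p) (snd p)) < e"
    using e unfolding uniformly_continuous_on_def by metis
  show ?thesis
  proof (intro exI[of _ "min d 1"] conjI allI ballI impI)
    show "min d 1 > 0" using d by simp
    fix x \<sigma> assume x: "x \<in> K" and \<sigma>: "\<bar>\<sigma> - s\<bar> < min d 1"
    have "(\<sigma>, x) \<in> cball s 1 \<times> K" "(s, x) \<in> cball s 1 \<times> K" using x \<sigma> by (auto simp: dist_real_def)
    moreover have "dist (\<sigma>, x) (s, x) < d" using \<sigma> by (simp add: dist_Pair_Pair dist_real_def)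
    ultimately show "dist (G \<sigma> x) (G s x) < e" using dd by fastforce
  qed
qed

lemma uniform_limit_parameter:
  fixes G :: "real \<Rightarrow> 'a::heine_borel \<Rightarrow> 'b::real_normed_vector"
  assumes cont: "continuous_on UNIV (\<lambda>p. G (fst p) (snd p))" and K: "compact K" and h: "h \<longlonglongrightarrow> 0"
  shows "uniform_limit K (\<lambda>m. G (s + h m)) (G s) sequentially"
  unfolding uniform_limit_sequentially_iff
proof (intro allI impI)
  fix e :: real assume "e > 0"
  then obtain d where d: "d > 0" and dd: "\<forall>x\<in>K. \<forall>\<sigma>. \<bar>\<sigma> - s\<bar> < d \<longrightarrow> dist (G \<sigma> x) (G s x) < e"
    using uniformly_continuous_in_parameter[OF cont K] by blast
  obtain N where "\<forall>n\<ge>N. \<bar>h n\<bar> < d" using h d unfolding LIMSEQ_def dist_real_def by auto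
  with dd show "\<exists>N. \<forall>n\<ge>N. \<forall>x\<in>K. dist (G (s + h n) x) (G s x) < e"
    by (intro exI[of _ N]) auto
qed

lemma norm_increment_le:
  fixes f :: "real \<Rightarrow> 'b::real_normed_vector"
  assumes der: "\<And>\<sigma>. (f has_vector_derivative f' \<sigma>) (at \<sigma>)"
    and bound: "\<And>\<sigma>. \<sigma> \<in> closed_segment s (s + t) \<Longrightarrow> norm (f' \<sigma> - f' s) \<le> e"
  shows "norm (f (s + t) - f s - t *\<^sub>R f' s) \<le> e * \<bar>t\<bar>"
proof -
  have "norm (f (s + t) - f s - (\<lambda>u. u *\<^sub>R f' s) ((s + t) - s)) \<le> norm ((s + t) - s) * e"
  proof (rule differentiable_bound_linearization[where S = "closed_segment s (s + t)"])
    show "s + u *\<^sub>R ((s + t) - s) \<in> closed_segment s (s + t)" if "u \<in> {0..1}" for u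
      using that by (auto simp: closed_segment_def algebra_simps)
    show "(f has_derivative (\<lambda>u. u *\<^sub>R f' \<sigma>)) (at \<sigma> within closed_segment s (s + t))" for \<sigma>
      using der[of \<sigma>] by (simp add: has_vector_derivative_def has_derivative_at_withinI)
    show "onorm ((\<lambda>u. u *\<^sub>R f' \<sigma>) - (\<lambda>u. u *\<^sub>R f' s)) \<le> e"
      if "\<sigma> \<in> closed_segment s (s + t)" for \<sigma>
    proof -
      have "(\<lambda>u. u *\<^sub>R f' \<sigma>) - (\<lambda>u. u *\<^sub>R f' s) = (\<lambda>u. u *\<^sub>R (f' \<sigma> - f' s))"
        by (simp add: fun_eq_iff scaleR_diff_right)
      then show ?thesis
        using bound[OF that] by (simp add: onorm_scaleR_left[OF bounded_linear_ident] onorm_id)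
    qed
  qed simp
  then show ?thesis by (simp add: mult.commute)
qed

lemma uniform_limit_difference_quotient:
  fixes G :: "real \<Rightarrow> 'a::heine_borel \<Rightarrow> 'b::real_normed_vector"
  assumes der: "\<And>s x. ((\<lambda>s. G s x) has_vector_derivative G' s x) (at s)"
    and cont: "continuous_on UNIV (\<lambda>p. G' (fst p) (snd p))" and K: "compact K"
    and h: "h \<longlonglongrightarrow> 0" "\<And>m. h m \<noteq> 0"
  shows "uniform_limit K (\<lambda>m x. (1 / h m) *\<^sub>R G (s + h m) x + (- (1 / h m)) *\<^sub>R G s x) (G' s) sequentially"
  unfolding uniform_limit_sequentially_iff
proof (intro allI impI)
  fix e :: real assume e: "e > 0"
  then obtain d where d: "d > 0" and dd: "\<forall>x\<in>K. \<forall>\<sigma>. \<bar>\<sigma> - s\<bar> < d \<longrightarrow> dist (G' \<sigma> x) (G' s x) < e/2"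
    using uniformly_continuous_in_parameter[OF cont K, of "e/2" s] by auto
  obtain N where N: "\<forall>n\<ge>N. \<bar>h n\<bar> < d" using h d unfolding LIMSEQ_def dist_real_def by auto
  have "dist ((1 / h n) *\<^sub>R G (s + h n) x + (- (1 / h n)) *\<^sub>R G s x) (G' s x) < e"
    if n: "n \<ge> N" and x: "x \<in> K" for n x
  proof -
    have "norm (G (s + h n) x - G s x - h n *\<^sub>R G' s x) \<le> e/2 * \<bar>h n\<bar>"
    proof (rule norm_increment_le[OF der])
      fix \<sigma> assume "\<sigma> \<in> closed_segment s (s + h n)"
      then have "\<bar>\<sigma> - s\<bar> < d"
        using N n by (auto simp: closed_segment_eq_real_ivl split: if_splits)
      then show "norm (G' \<sigma> x - G' s x) \<le> e/2"
        using dd x by (auto simp: dist_norm less_imp_le)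
    qed
    moreover have "(1 / h n) *\<^sub>R G (s + h n) x + (- (1 / h n)) *\<^sub>R G s x - G' s x
        = (1 / h n) *\<^sub>R (G (s + h n) x - G s x - h n *\<^sub>R G' s x)"
      using h(2)[of n] by (simp add: algebra_simps divide_simps)
    moreover have "0 < e * \<bar>h n\<bar>"
      using h(2)[of n] e by simp
    ultimately show ?thesis
      using h(2)[of n] by (simp add: dist_norm divide_simps mult.commute)
  qed
  then show "\<exists>N. \<forall>n\<ge>N. \<forall>x\<in>K. dist ((1 / h n) *\<^sub>R G (s + h n) x + (- (1 / h n)) *\<^sub>R G s x) (G' s x) < e"
    by blast
qed

lemma norm_sum_components_diff_le:
  fixes h :: "real^'n::finite" and a b :: "'n \<Rightarrow> 'b::real_normed_vector" and e :: real
  assumes "\<And>j. norm (a j - b j) \<le> e"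
  shows "norm ((\<Sum>j\<in>UNIV. h$j *\<^sub>R a j) - (\<Sum>j\<in>UNIV. h$j *\<^sub>R b j)) \<le> CARD('n) * e * norm h"
proof -
  have "norm ((\<Sum>j\<in>UNIV. h$j *\<^sub>R a j) - (\<Sum>j\<in>UNIV. h$j *\<^sub>R b j))
      \<le> (\<Sum>j\<in>UNIV. norm (h$j *\<^sub>R (a j - b j)))"
    by (simp add: sum_subtractf[symmetric] scaleR_diff_right norm_sum del: real_norm_def)
  also have "\<dots> \<le> (\<Sum>j\<in>(UNIV::'n set). norm h * e)"
    by (intro sum_mono) (simp add: mult_mono component_le_norm_cart assms)
  finally show ?thesis by (simp add: mult_ac)
qed

lemma eventually_uniform_limit_components:
  fixes g :: "'n::finite \<Rightarrow> nat \<Rightarrow> 'a \<Rightarrow> 'b::real_normed_vector"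
  assumes g: "\<And>j. uniform_limit S (g j) (G j) sequentially" and e: "e > 0"
  shows "\<forall>\<^sub>F n in sequentially. \<forall>y\<in>S. \<forall>h::real^'n.
           norm ((\<Sum>j\<in>UNIV. h$j *\<^sub>R g j n y) - (\<Sum>j\<in>UNIV. h$j *\<^sub>R G j y)) \<le> e * norm h"
proof -
  have "\<forall>\<^sub>F n in sequentially. \<forall>y\<in>S. dist (g j n y) (G j y) < e / CARD('n)" for j
    using e by (intro uniform_limitD[OF g]) simp
  then have "\<forall>\<^sub>F n in sequentially. \<forall>j. \<forall>y\<in>S. dist (g j n y) (G j y) < e / CARD('n)"
    by (rule eventually_all_finite)
  then show ?thesis
  proof (rule eventually_mono, intro ballI allI)
    fix n y and h :: "real^'n"
    assume n: "\<forall>j. \<forall>y\<in>S. dist (g j n y) (G j y) < e / CARD('n)" and y: "y \<in> S"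
    have "norm (g j n y - G j y) \<le> e / CARD('n)" for j
      using bspec[OF spec[OF n, of j] y] by (simp add: dist_norm)
    from norm_sum_components_diff_le[where a = "\<lambda>j. g j n y" and b = "\<lambda>j. G j y", OF this, of h]
    show "norm ((\<Sum>j\<in>UNIV. h$j *\<^sub>R g j n y) - (\<Sum>j\<in>UNIV. h$j *\<^sub>R G j y)) \<le> e * norm h"
      by simp
  qed
qed

lemma has_derivative_uniform_limit:
  fixes f :: "nat \<Rightarrow> real^'n::finite \<Rightarrow> 'b::banach"
  assumes der: "\<And>m y. (f m has_derivative (\<lambda>v. \<Sum>j\<in>UNIV. v$j *\<^sub>R g j m y)) (at y)"
    and f: "uniform_limit (cball x 1) f F sequentially"
    and g: "\<And>j. uniform_limit (cball x 1) (g j) (G j) sequentially"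
  shows "(F has_derivative (\<lambda>v. \<Sum>j\<in>UNIV. v$j *\<^sub>R G j x)) (at x)"
proof -
  let ?S = "ball x 1"
  have x: "x \<in> ?S" by simp
  have "\<exists>F'. \<forall>y\<in>?S. (\<lambda>n. f n y) \<longlonglongrightarrow> F' y
      \<and> (F' has_derivative (\<lambda>v. \<Sum>j\<in>UNIV. v$j *\<^sub>R G j y)) (at y within ?S)"
  proof (rule has_derivative_sequence[where f' = "\<lambda>n y v. \<Sum>j\<in>UNIV. v$j *\<^sub>R g j n y", OF convex_ball _ _ x])
    show "(f n has_derivative (\<lambda>v. \<Sum>j\<in>UNIV. v$j *\<^sub>R g j n y)) (at y within ?S)" for n y
      by (rule has_derivative_at_withinI[OF der])
    show "\<forall>\<^sub>F n in sequentially. \<forall>y\<in>?S. \<forall>h.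
        norm ((\<Sum>j\<in>UNIV. h$j *\<^sub>R g j n y) - (\<Sum>j\<in>UNIV. h$j *\<^sub>R G j y)) \<le> e * norm h" if "e > 0" for e
      using uniform_limit_on_subset[OF g ball_subset_cball] that by (rule eventually_uniform_limit_components)
    show "(\<lambda>n. f n x) \<longlonglongrightarrow> F x"
      using tendsto_uniform_limitI[OF f] by simp
  qed
  then obtain F' where F': "\<forall>y\<in>?S. (\<lambda>n. f n y) \<longlonglongrightarrow> F' y
      \<and> (F' has_derivative (\<lambda>v. \<Sum>j\<in>UNIV. v$j *\<^sub>R G j y)) (at y within ?S)"
    by blast
  have eq: "F' y = F y" if y: "y \<in> ?S" for y
  proof (rule LIMSEQ_unique)
    show "(\<lambda>n. f n y) \<longlonglongrightarrow> F' y" using F' y by blast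
    have "y \<in> cball x 1" using y by simp
    then show "(\<lambda>n. f n y) \<longlonglongrightarrow> F y" by (rule tendsto_uniform_limitI[OF f])
  qed
  have "(F' has_derivative (\<lambda>v. \<Sum>j\<in>UNIV. v$j *\<^sub>R G j x)) (at x within ?S)"
    using F' x by blast
  then have "(F' has_derivative (\<lambda>v. \<Sum>j\<in>UNIV. v$j *\<^sub>R G j x)) (at x)"
    by (simp only: at_within_open[OF x open_ball])
  then show ?thesis
    by (rule has_derivative_transform_within_open[OF _ open_ball x eq])
qed

section \<open>Smooth one-parameter families of vector fields\<close>

text \<open>\<open>H js m s\<close> plays the role of \<open>\<partial>\<^sub>s\<^sup>m \<partial>\<^bsup>js\<^esup> \<Gamma> s\<close>; requiring all of these to be jointly
  continuous makes \<open>s \<mapsto> \<Gamma> s\<close> a smooth curve in the Frechet space of vector fields.\<close>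

definition smooth_family ::
    "(real \<Rightarrow> real^'n::finite \<Rightarrow> real^'n) \<Rightarrow> ('n list \<Rightarrow> nat \<Rightarrow> real \<Rightarrow> real^'n \<Rightarrow> real^'n) \<Rightarrow> bool" where
  "smooth_family \<Gamma> H \<longleftrightarrow> (\<forall>s. smooth_map (\<Gamma> s)) \<and> (\<forall>js s. iter_partial js (\<Gamma> s) = H js 0 s)
     \<and> (\<forall>js m s x. ((\<lambda>s. H js m s x) has_vector_derivative H js (Suc m) s x) (at s))
     \<and> (\<forall>js m. continuous_on UNIV (\<lambda>p. H js m (fst p) (snd p)))"

lemma smooth_family_smooth_map: "smooth_family \<Gamma> H \<Longrightarrow> smooth_map (\<Gamma> s)"
  unfolding smooth_family_def by blast

lemma vf_conv_const: "vf_conv (\<lambda>m. X) X"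
  unfolding vf_conv_def by (simp add: uniform_limit_const)

lemma vf_conv_smooth_family:
  assumes "smooth_family \<Gamma> H" "h \<longlonglongrightarrow> 0"
  shows "vf_conv (\<lambda>m. \<Gamma> (s + h m)) (\<Gamma> s)"
  using assms uniform_limit_parameter[of "H js 0" for js]
  unfolding vf_conv_iff_iter_partial smooth_family_def by simp

lemma uniform_limit_smooth_family_difference_quotient:
  assumes \<Gamma>: "smooth_family \<Gamma> H" and h: "h \<longlonglongrightarrow> 0" "\<And>m. h m \<noteq> 0" and K: "compact K"
  shows "uniform_limit K (\<lambda>m. iter_partial js (\<lambda>x. (1 / h m) *\<^sub>R \<Gamma> (s + h m) x + (- (1 / h m)) *\<^sub>R \<Gamma> s x))
           (H js 1 s) sequentially"
proof -
  have "uniform_limit K (\<lambda>m x. (1 / h m) *\<^sub>R H js 0 (s + h m) x + (- (1 / h m)) *\<^sub>R H js 0 s x) (H js 1 s) sequentially"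
    using \<Gamma> unfolding smooth_family_def One_nat_def
    by (intro uniform_limit_difference_quotient[OF _ _ K h]) blast+
  moreover have "iter_partial js (\<lambda>x. a *\<^sub>R \<Gamma> s' x + b *\<^sub>R \<Gamma> s x) = (\<lambda>x. a *\<^sub>R H js 0 s' x + b *\<^sub>R H js 0 s x)"
    for a b s'
    using \<Gamma> by (simp add: iter_partial_lincomb smooth_family_smooth_map) (simp add: smooth_family_def)
  ultimately show ?thesis by (simp only:)
qed

lemma has_derivative_smooth_family_deriv:
  assumes \<Gamma>: "smooth_family \<Gamma> H"
  shows "(H js 1 s has_derivative (\<lambda>v. \<Sum>j\<in>UNIV. v$j *\<^sub>R H (j # js) 1 s x)) (at x)"
proof -
  define h :: "nat \<Rightarrow> real" where "h m = 1 / real (Suc m)" for m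
  have h: "h \<longlonglongrightarrow> 0" "\<And>m. h m \<noteq> 0"
    unfolding h_def using LIMSEQ_Suc[OF lim_inverse_n'] by auto
  define Q where "Q m = (\<lambda>x. (1 / h m) *\<^sub>R \<Gamma> (s + h m) x + (- (1 / h m)) *\<^sub>R \<Gamma> s x)" for m
  have Q: "smooth_map (Q m)" for m
    unfolding Q_def by (intro smooth_map_lincomb smooth_family_smooth_map[OF \<Gamma>])
  show ?thesis
  proof (rule has_derivative_uniform_limit[where f = "\<lambda>m. iter_partial js (Q m)" and g = "\<lambda>j m. iter_partial (j # js) (Q m)"])
    show "(iter_partial js (Q m) has_derivative (\<lambda>v. \<Sum>j\<in>UNIV. v $ j *\<^sub>R iter_partial (j # js) (Q m) y)) (at y)" for m y
      using has_derivative_partials[OF smooth_map_differentiable[OF smooth_map_iter_partial[OF Q]]] by simp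
    have lim: "uniform_limit (cball x 1) (\<lambda>m. iter_partial js' (Q m)) (H js' 1 s) sequentially" for js'
      unfolding Q_def by (rule uniform_limit_smooth_family_difference_quotient[OF \<Gamma> h]) simp
    show "uniform_limit (cball x 1) (\<lambda>m. iter_partial js (Q m)) (H js 1 s) sequentially"
      by (rule lim)
    show "uniform_limit (cball x 1) (\<lambda>m. iter_partial (j # js) (Q m)) (H (j # js) 1 s) sequentially" for j
      by (rule lim)
  qed
qed

lemma smooth_family_deriv:
  assumes \<Gamma>: "smooth_family \<Gamma> H"
  shows "smooth_family (H [] 1) (\<lambda>js m. H js (Suc m))"
proof -
  have partial: "partial_deriv j (H js 1 s) = H (j # js) 1 s" for j js s
    using partial_deriv_eq[OF has_derivative_smooth_family_deriv[OF \<Gamma>]]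
    by (simp add: fun_eq_iff sum_axis_scaleR)
  have iter: "iter_partial js (H [] 1 s) = H js 1 s" for js s
    by (induction js) (simp_all add: partial[unfolded One_nat_def])
  have "smooth_map (H [] 1 s)" for s
    using has_derivative_smooth_family_deriv[OF \<Gamma>]
    unfolding smooth_map_def iter differentiable_def by blast
  with \<Gamma> iter show ?thesis
    unfolding smooth_family_def by simp
qed

lemma smooth_family_higher_deriv:
  assumes "smooth_family \<Gamma> H"
  shows "smooth_family (H [] a) (\<lambda>js m. H js (m + a))"
proof (induction a)
  case 0
  have "\<Gamma> = H [] 0"
    using assms unfolding smooth_family_def by (metis iter_partial.simps(1) ext)
  with assms show ?case by simp
next
  case (Suc a)
  from smooth_family_deriv[OF Suc] show ?case by simp
qed

lemma vf_conv_smooth_family_difference_quotient: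
  assumes \<Gamma>: "smooth_family \<Gamma> H" and h: "h \<longlonglongrightarrow> 0" "\<And>m. h m \<noteq> 0"
  shows "vf_conv (\<lambda>m x. (1 / h m) *\<^sub>R \<Gamma> (s + h m) x + (- (1 / h m)) *\<^sub>R \<Gamma> s x) (H [] 1 s)"
proof -
  have "iter_partial js (H [] 1 s) = H js 1 s" for js
    using smooth_family_deriv[OF \<Gamma>] unfolding smooth_family_def by simp
  then show ?thesis
    unfolding vf_conv_iff_iter_partial
    using uniform_limit_smooth_family_difference_quotient[OF \<Gamma> h] by simp
qed

section \<open>Differentiating a cochain along smooth families\<close>

lemma cochain_cong: "cochain q c \<Longrightarrow> (\<And>i. i < q \<Longrightarrow> Xs i = Ys i) \<Longrightarrow> c Xs = c Ys"
  unfolding cochain_def by blast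

lemma cochain_linear:
  assumes "cochain q c" "\<And>l. l < q \<Longrightarrow> smooth_map (Xs l)" "i < q" "smooth_map Y" "smooth_map Z"
  shows "c (Xs(i := (\<lambda>x. a *\<^sub>R Y x + b *\<^sub>R Z x))) = a * c (Xs(i := Y)) + b * c (Xs(i := Z))"
proof -
  have "\<forall>Xs i Y Z a b. (\<forall>l<q. smooth_vf (Xs l)) \<and> i < q \<and> smooth_vf Y \<and> smooth_vf Z \<longrightarrow>
      c (Xs(i := (\<lambda>x. a *\<^sub>R Y x + b *\<^sub>R Z x))) = a * c (Xs(i := Y)) + b * c (Xs(i := Z))"
    using assms(1) unfolding cochain_def by blast
  then show ?thesis
    using assms(2-5) by (simp add: smooth_vf_iff_smooth_map)
qed

lemma cochain_continuous:
  assumes "cochain q c" "\<And>l. l < q \<Longrightarrow> smooth_map (Xs l)" "\<And>l m. l < q \<Longrightarrow> smooth_map (Ys m l)"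
    "\<And>l. l < q \<Longrightarrow> vf_conv (\<lambda>m. Ys m l) (Xs l)"
  shows "(\<lambda>m. c (Ys m)) \<longlonglongrightarrow> c Xs"
proof -
  have "\<forall>Ys Xs. (\<forall>l<q. smooth_vf (Xs l) \<and> (\<forall>m. smooth_vf (Ys m l)) \<and> vf_conv (\<lambda>m. Ys m l) (Xs l)) \<longrightarrow>
      (\<lambda>m. c (Ys m)) \<longlonglongrightarrow> c Xs"
    using assms(1) unfolding cochain_def by blast
  then show ?thesis
    using assms(2-4) by (simp add: smooth_vf_iff_smooth_map)
qed

lemma cochain_scaleR:
  assumes c: "cochain q c" and Xs: "\<And>i. i < q \<Longrightarrow> smooth_map (Xs i)"
  shows "c (\<lambda>i x. a i *\<^sub>R Xs i x) = (\<Prod>i<q. a i) * c Xs"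
proof -
  define Ys where "Ys m = (\<lambda>i. if i < m then (\<lambda>x. a i *\<^sub>R Xs i x) else Xs i)" for m
  have "c (Ys m) = (\<Prod>i<m. a i) * c Xs" if "m \<le> q" for m
    using that
  proof (induction m)
    case (Suc m)
    have "(Ys m)(m := (\<lambda>x. a m *\<^sub>R Xs m x + 0 *\<^sub>R Xs m x)) = Ys (Suc m)"
      and "(Ys m)(m := Xs m) = Ys m"
      by (auto simp: Ys_def)
    moreover have "\<And>l. l < q \<Longrightarrow> smooth_map (Ys m l)"
      using Xs by (simp add: Ys_def smooth_map_scaleR)
    ultimately have "c (Ys (Suc m)) = a m * c (Ys m)"
      using cochain_linear[OF c, of "Ys m" m "Xs m" "Xs m" "a m" 0] Suc.prems Xs by simp
    with Suc show ?case by simp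
  qed (simp add: Ys_def)
  moreover have "c (\<lambda>i x. a i *\<^sub>R Xs i x) = c (Ys q)"
    by (rule cochain_cong[OF c]) (simp add: Ys_def)
  ultimately show ?thesis by simp
qed

lemma cochain_diff_telescope:
  assumes c: "cochain q c" and A: "\<And>i. i < q \<Longrightarrow> smooth_map (A i)" and B: "\<And>i. i < q \<Longrightarrow> smooth_map (B i)"
  shows "a * (c B - c A) =
    (\<Sum>j<q. c ((\<lambda>i. if i < j then B i else A i)(j := (\<lambda>x. a *\<^sub>R B j x + (- a) *\<^sub>R A j x))))"
proof -
  define Z where "Z j = (\<lambda>i. if i < j then B i else A i)" for j
  have "c ((Z j)(j := (\<lambda>x. a *\<^sub>R B j x + (- a) *\<^sub>R A j x))) = a * (c (Z (Suc j)) - c (Z j))"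
    if j: "j < q" for j
  proof -
    have "(Z j)(j := B j) = Z (Suc j)" "(Z j)(j := A j) = Z j"
      by (auto simp: Z_def)
    moreover have "\<And>l. l < q \<Longrightarrow> smooth_map (Z j l)"
      using A B by (simp add: Z_def)
    ultimately show ?thesis
      using cochain_linear[OF c, of "Z j" j "B j" "A j" a "- a"] j A B by (simp add: algebra_simps)
  qed
  then have "(\<Sum>j<q. c ((Z j)(j := (\<lambda>x. a *\<^sub>R B j x + (- a) *\<^sub>R A j x))))
      = (\<Sum>j<q. a * (c (Z (Suc j)) - c (Z j)))"
    by simp
  also have "\<dots> = a * (c (Z q) - c (Z 0))"
    by (simp only: sum_distrib_left[symmetric] sum_lessThan_telescope[of "\<lambda>j. c (Z j)"])
  also have "c (Z q) = c B"
    by (rule cochain_cong[OF c]) (simp add: Z_def)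
  also have "Z 0 = A"
    by (simp add: Z_def)
  finally show ?thesis
    unfolding Z_def by (rule sym)
qed

lemma has_real_derivative_cochain_smooth_families:
  assumes c: "cochain q c" and \<Gamma>: "\<And>i. i < q \<Longrightarrow> smooth_family (\<Gamma> i) (H i)"
  shows "((\<lambda>t. c (\<lambda>i. \<Gamma> i t)) has_real_derivative (\<Sum>j<q. c ((\<lambda>i. \<Gamma> i t)(j := H j [] 1 t)))) (at t)"
  unfolding has_field_derivative_iff tendsto_at_iff_sequentially o_def
proof (intro allI impI)
  fix X :: "nat \<Rightarrow> real" assume X: "\<forall>i. X i \<in> UNIV - {t}" "X \<longlonglongrightarrow> t"
  define h where "h = (\<lambda>m. X m - t)"
  have h: "h \<longlonglongrightarrow> 0" "\<And>m. h m \<noteq> 0"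
    using X tendsto_diff[OF X(2) tendsto_const[of t]] by (auto simp: h_def)
  define Z where "Z m j = (\<lambda>i. if i < j then \<Gamma> i (t + h m) else \<Gamma> i t)
      (j := (\<lambda>x. (1 / h m) *\<^sub>R \<Gamma> j (t + h m) x + (- (1 / h m)) *\<^sub>R \<Gamma> j t x))" for m j
  have "(c (\<lambda>i. \<Gamma> i (X m)) - c (\<lambda>i. \<Gamma> i t)) / (X m - t) = (\<Sum>j<q. c (Z m j))" for m
    using cochain_diff_telescope[OF c, of "\<lambda>i. \<Gamma> i t" "\<lambda>i. \<Gamma> i (t + h m)" "1 / h m"]
      smooth_family_smooth_map[OF \<Gamma>]
    by (simp add: Z_def h_def divide_inverse mult.commute)
  moreover have "(\<lambda>m. c (Z m j)) \<longlonglongrightarrow> c ((\<lambda>i. \<Gamma> i t)(j := H j [] 1 t))" if j: "j < q" for j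
  proof (rule cochain_continuous[OF c])
    fix l assume l: "l < q"
    show "smooth_map (((\<lambda>i. \<Gamma> i t)(j := H j [] 1 t)) l)"
      using smooth_family_smooth_map[OF \<Gamma>] smooth_family_smooth_map[OF smooth_family_deriv[OF \<Gamma>]] l j
      by simp
    show "smooth_map (Z m j l)" for m
    proof -
      have "smooth_map (\<lambda>x. (1 / h m) *\<^sub>R \<Gamma> j (t + h m) x + (- (1 / h m)) *\<^sub>R \<Gamma> j t x)"
        by (intro smooth_map_lincomb smooth_family_smooth_map[OF \<Gamma>[OF j]])
      then show ?thesis
        using smooth_family_smooth_map[OF \<Gamma>] l by (simp add: Z_def)
    qed
    show "vf_conv (\<lambda>m. Z m j l) (((\<lambda>i. \<Gamma> i t)(j := H j [] 1 t)) l)"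
      using vf_conv_smooth_family_difference_quotient[OF \<Gamma>[OF j] h]
        vf_conv_smooth_family[OF \<Gamma>[OF l] h(1)]
      by (cases "l < j") (simp_all add: Z_def vf_conv_const)
  qed
  ultimately show "(\<lambda>m. (c (\<lambda>i. \<Gamma> i (X m)) - c (\<lambda>i. \<Gamma> i t)) / (X m - t))
      \<longlonglongrightarrow> (\<Sum>j<q. c ((\<lambda>i. \<Gamma> i t)(j := H j [] 1 t)))"
    by (simp only:) (rule tendsto_sum, simp)
qed

text \<open>\<open>cochain_deriv c q H m a\<close> is the \<open>m\<close>-th derivative of \<open>t \<mapsto> c (\<lambda>i. H i [] (a i) t)\<close>,
  expanded into a sum over all ways of distributing the \<open>m\<close> derivatives among the \<open>q\<close> slots.\<close>

fun cochain_deriv :: "((nat \<Rightarrow> real^'n::finite \<Rightarrow> real^'n) \<Rightarrow> real) \<Rightarrow> nat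
    \<Rightarrow> (nat \<Rightarrow> 'n list \<Rightarrow> nat \<Rightarrow> real \<Rightarrow> real^'n \<Rightarrow> real^'n) \<Rightarrow> nat \<Rightarrow> (nat \<Rightarrow> nat) \<Rightarrow> real \<Rightarrow> real" where
  "cochain_deriv c q H 0 a t = c (\<lambda>i. H i [] (a i) t)"
| "cochain_deriv c q H (Suc m) a t = (\<Sum>j<q. cochain_deriv c q H m (a(j := Suc (a j))) t)"

lemma has_real_derivative_cochain_deriv:
  assumes c: "cochain q c" and \<Gamma>: "\<And>i. i < q \<Longrightarrow> smooth_family (\<Gamma> i) (H i)"
  shows "(cochain_deriv c q H m a has_real_derivative cochain_deriv c q H (Suc m) a t) (at t)"
proof (induction m arbitrary: a)
  case 0
  have "smooth_family (H i [] (a i)) (\<lambda>js m. H i js (m + a i))" if "i < q" for i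
    by (rule smooth_family_higher_deriv[OF \<Gamma>[OF that]])
  from has_real_derivative_cochain_smooth_families[OF c this]
  have "((\<lambda>t. c (\<lambda>i. H i [] (a i) t)) has_real_derivative
      (\<Sum>j<q. c ((\<lambda>i. H i [] (a i) t)(j := H j [] (Suc (a j)) t)))) (at t)"
    by simp
  moreover have "(\<lambda>i. H i [] (a i) t)(j := H j [] (Suc (a j)) t) = (\<lambda>i. H i [] ((a(j := Suc (a j))) i) t)" for j
    by auto
  ultimately show ?case
    by (simp add: fun_eq_iff[symmetric])
next
  case (Suc m)
  have "cochain_deriv c q H (Suc m) a = (\<lambda>t. \<Sum>j<q. cochain_deriv c q H m (a(j := Suc (a j))) t)"
    by (simp add: fun_eq_iff)
  then show ?case
    by (simp only: cochain_deriv.simps(2)[of c q H "Suc m"]) (intro DERIV_sum Suc.IH)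
qed

lemma sum_fun_upd_Suc:
  fixes a :: "nat \<Rightarrow> nat"
  assumes "j < q"
  shows "(\<Sum>i<q. (a(j := Suc (a j))) i) = Suc (\<Sum>i<q. a i)"
proof -
  have "(\<Sum>i<q. (a(j := Suc (a j))) i) = Suc (a j) + (\<Sum>i\<in>{..<q} - {j}. a i)"
    using assms by (simp add: sum.remove[of "{..<q}" j])
  also have "\<dots> = Suc (\<Sum>i<q. a i)"
    using assms by (simp add: sum.remove[of "{..<q}" j])
  finally show ?thesis .
qed

lemma cochain_deriv_eq_0:
  assumes "\<And>a. int (\<Sum>i<q. a i) - int q < k \<Longrightarrow> c (\<lambda>i. H i [] (a i) 0) = 0"
  shows "int m + int (\<Sum>i<q. a i) - int q < k \<Longrightarrow> cochain_deriv c q H m a 0 = 0"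
proof (induction m arbitrary: a)
  case 0
  then show ?case using assms by simp
next
  case (Suc m)
  have "cochain_deriv c q H m (a(j := Suc (a j))) 0 = 0" if "j < q" for j
  proof (rule Suc.IH)
    have "int (\<Sum>i<q. (a(j := Suc (a j))) i) = int (\<Sum>i<q. a i) + 1"
      by (simp only: sum_fun_upd_Suc[OF that] of_nat_Suc)
    with Suc.prems show "int m + int (\<Sum>i<q. (a(j := Suc (a j))) i) - int q < k"
      by linarith
  qed
  then show ?case by simp
qed

section \<open>The dilation family \<open>s \<mapsto> X (s x)\<close>\<close>

definition pow_deriv :: "nat \<Rightarrow> nat \<Rightarrow> real \<Rightarrow> real" where
  "pow_deriv p l s = (\<Prod>r<l. real (p - r)) * s ^ (p - l)"

lemma has_real_derivative_pow_deriv: "(pow_deriv p l has_real_derivative pow_deriv p (Suc l) s) (at s)"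
proof -
  have "((\<lambda>s. (\<Prod>r<l. real (p - r)) * s ^ (p - l)) has_real_derivative
      (\<Prod>r<l. real (p - r)) * (real (p - l) * s ^ (p - l - Suc 0))) (at s)"
    by (intro DERIV_cmult DERIV_pow)
  then show ?thesis
    by (simp add: pow_deriv_def[abs_def] mult.assoc)
qed

lemma continuous_on_pow_deriv: "continuous_on UNIV (pow_deriv p l)"
  unfolding pow_deriv_def by (intro continuous_intros)

lemma pow_deriv_0: "pow_deriv p 0 s = s ^ p"
  by (simp add: pow_deriv_def)

lemma pow_deriv_const: "pow_deriv 0 l s = (if l = 0 then 1 else 0)"
  by (cases l) (simp_all add: pow_deriv_def lessThan_Suc_eq_insert_0)

text \<open>The \<open>m\<close>-th derivative of \<open>a i s *\<^sub>R F j s\<close>, written as a sum of \<open>2\<^sup>m\<close> terms so that no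
  binomial coefficients appear.\<close>

fun leibniz_deriv :: "(nat \<Rightarrow> real \<Rightarrow> real) \<Rightarrow> (nat \<Rightarrow> real \<Rightarrow> 'v::real_normed_vector) \<Rightarrow> nat \<Rightarrow> nat \<Rightarrow> nat \<Rightarrow> real \<Rightarrow> 'v" where
  "leibniz_deriv a F 0 i j s = a i s *\<^sub>R F j s"
| "leibniz_deriv a F (Suc m) i j s = leibniz_deriv a F m (Suc i) j s + leibniz_deriv a F m i (Suc j) s"

lemma has_vector_derivative_leibniz_deriv:
  assumes a: "\<And>l s. (a l has_real_derivative a (Suc l) s) (at s)"
    and F: "\<And>l s. (F l has_vector_derivative F (Suc l) s) (at s)"
  shows "((\<lambda>s. leibniz_deriv a F m i j s) has_vector_derivative leibniz_deriv a F (Suc m) i j s) (at s)"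
proof (induction m arbitrary: i j)
  case 0
  show ?case
    using has_vector_derivative_scaleR[OF a F] by (simp add: add.commute)
next
  case (Suc m)
  show ?case
    using has_vector_derivative_add[OF Suc.IH[of "Suc i" j] Suc.IH[of i "Suc j"]] by simp
qed

lemma continuous_on_leibniz_deriv:
  fixes G :: "nat \<Rightarrow> real \<Rightarrow> 'x::topological_space \<Rightarrow> 'v::real_normed_vector"
  assumes a: "\<And>l. continuous_on UNIV (a l)" and G: "\<And>l. continuous_on UNIV (\<lambda>p. G l (fst p) (snd p))"
  shows "continuous_on UNIV (\<lambda>p. leibniz_deriv a (\<lambda>l s. G l s (snd p)) m i j (fst p))"
proof (induction m arbitrary: i j)
  case 0
  have "continuous_on UNIV (\<lambda>p::real \<times> 'x. a i (fst p))"
    by (rule continuous_on_compose2[OF a continuous_on_fst]) auto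
  with G show ?case by (simp add: continuous_on_scaleR)
next
  case (Suc m)
  then show ?case by (simp add: continuous_on_add)
qed

lemma leibniz_deriv_const:
  assumes "\<And>l s. a l s = (if l = 0 then 1 else 0)"
  shows "leibniz_deriv a F m i j s = (if i = 0 then F (j + m) s else 0)"
  using assms by (induction m arbitrary: i j) auto

text \<open>\<open>dir_deriv m js X x y\<close> is \<open>((x \<bullet> \<nabla>)\<^sup>m \<partial>\<^bsup>js\<^esup> X) y\<close>, the \<open>m\<close>-th derivative of
  \<open>\<partial>\<^bsup>js\<^esup> X\<close> in direction \<open>x\<close>.\<close>

fun dir_deriv :: "nat \<Rightarrow> 'n::finite list \<Rightarrow> (real^'n \<Rightarrow> real^'n) \<Rightarrow> real^'n \<Rightarrow> real^'n \<Rightarrow> real^'n" where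
  "dir_deriv 0 js X x y = iter_partial js X y"
| "dir_deriv (Suc m) js X x y = (\<Sum>i\<in>UNIV. (x$i) *\<^sub>R dir_deriv m (i # js) X x y)"

lemma has_vector_derivative_dir_deriv:
  assumes X: "smooth_map X"
  shows "((\<lambda>s. dir_deriv m js X x (s *\<^sub>R x)) has_vector_derivative dir_deriv (Suc m) js X x (s *\<^sub>R x)) (at s)"
proof (induction m arbitrary: js)
  case 0
  have "((\<lambda>s. s *\<^sub>R x) has_derivative (\<lambda>u. u *\<^sub>R x)) (at s)"
    by (rule bounded_linear.has_derivative[OF bounded_linear_scaleR_left has_derivative_ident])
  from diff_chain_at[OF this has_derivative_partials[OF smooth_map_differentiable[OF smooth_map_iter_partial[OF X]]]]
  show ?case
    by (simp add: has_vector_derivative_def o_def scaleR_sum_right)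
next
  case (Suc m)
  have "((\<lambda>s. \<Sum>i\<in>UNIV. x$i *\<^sub>R dir_deriv m (i # js) X x (s *\<^sub>R x)) has_vector_derivative
      (\<Sum>i\<in>UNIV. x$i *\<^sub>R dir_deriv (Suc m) (i # js) X x (s *\<^sub>R x))) (at s)"
    by (intro has_vector_derivative_sum bounded_linear.has_vector_derivative[OF bounded_linear_scaleR_right] Suc.IH)
  then show ?case by simp
qed

lemma continuous_on_dir_deriv:
  assumes X: "smooth_map X"
  shows "continuous_on UNIV (\<lambda>p::real \<times> (real^'n::finite). dir_deriv m js X (snd p) (fst p *\<^sub>R snd p))"
proof (induction m arbitrary: js)
  case 0
  have "continuous_on UNIV (iter_partial js X)"
    using smooth_map_differentiable[OF smooth_map_iter_partial[OF X]]
    by (intro differentiable_imp_continuous_on) (simp add: differentiable_on_def)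
  then have "continuous_on UNIV (\<lambda>p::real \<times> (real^'n). iter_partial js X (fst p *\<^sub>R snd p))"
    by (rule continuous_on_compose2) (auto intro!: continuous_intros)
  then show ?case by simp
next
  case (Suc m)
  then show ?case by (simp, intro continuous_intros)
qed

lemma differentiable_dilate:
  "f differentiable (at (s *\<^sub>R x)) \<Longrightarrow> (\<lambda>x. f (s *\<^sub>R x)) differentiable (at x)"
  by (rule differentiable_compose) (simp_all add: bounded_linear_imp_differentiable bounded_linear_scaleR_right)

lemma partial_deriv_dilate:
  assumes "\<And>x. f differentiable (at x)"
  shows "partial_deriv j (\<lambda>x. f (s *\<^sub>R x)) = (\<lambda>x. s *\<^sub>R partial_deriv j f (s *\<^sub>R x))"
proof
  fix x
  let ?F = "frechet_derivative f (at (s *\<^sub>R x))"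
  have F: "(f has_derivative ?F) (at (s *\<^sub>R x))"
    using assms frechet_derivative_works by blast
  have "((\<lambda>x. s *\<^sub>R x) has_derivative (\<lambda>v. s *\<^sub>R v)) (at x)"
    by (rule bounded_linear.has_derivative[OF bounded_linear_scaleR_right has_derivative_ident])
  from diff_chain_at[OF this F] have "((\<lambda>x. f (s *\<^sub>R x)) has_derivative (\<lambda>v. ?F (s *\<^sub>R v))) (at x)"
    by (simp add: o_def)
  from partial_deriv_eq[OF this] show "partial_deriv j (\<lambda>x. f (s *\<^sub>R x)) x = s *\<^sub>R partial_deriv j f (s *\<^sub>R x)"
    using linear_scale[OF has_derivative_linear[OF F]] by (simp add: partial_deriv_def)
qed

lemma iter_partial_dilate:
  assumes X: "smooth_map X"
  shows "iter_partial js (\<lambda>x. X (s *\<^sub>R x)) = (\<lambda>x. s ^ length js *\<^sub>R iter_partial js X (s *\<^sub>R x))"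
proof (induction js)
  case (Cons j js)
  have "\<And>x. iter_partial js X differentiable (at x)"
    using smooth_map_differentiable[OF smooth_map_iter_partial[OF X]] .
  with Cons show ?case
    by (simp add: partial_deriv_linear[OF bounded_linear_scaleR_right] differentiable_dilate
        partial_deriv_dilate mult.commute)
qed simp

lemma smooth_map_dilate:
  assumes X: "smooth_map X"
  shows "smooth_map (\<lambda>x. X (s *\<^sub>R x))"
  unfolding smooth_map_def iter_partial_dilate[OF X]
  using smooth_map_differentiable[OF smooth_map_iter_partial[OF X]]
  by (simp add: differentiable_dilate)

text \<open>\<open>\<partial>\<^bsup>js\<^esup> (X (s x)) = s\<^bsup>|js|\<^esup> (\<partial>\<^bsup>js\<^esup> X) (s x)\<close>, so its \<open>m\<close>-th \<open>s\<close>-derivative is given by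
  the Leibniz rule applied to the power of \<open>s\<close> and to \<open>s \<mapsto> (\<partial>\<^bsup>js\<^esup> X) (s x)\<close>.\<close>

definition dilation_deriv :: "(real^'n::finite \<Rightarrow> real^'n) \<Rightarrow> 'n list \<Rightarrow> nat \<Rightarrow> real \<Rightarrow> real^'n \<Rightarrow> real^'n" where
  "dilation_deriv X js m s x = leibniz_deriv (pow_deriv (length js)) (\<lambda>l s. dir_deriv l js X x (s *\<^sub>R x)) m 0 0 s"

lemma smooth_family_dilation:
  assumes X: "smooth_map X"
  shows "smooth_family (\<lambda>s x. X (s *\<^sub>R x)) (dilation_deriv X)"
  unfolding smooth_family_def
proof (intro conjI allI)
  show "smooth_map (\<lambda>x. X (s *\<^sub>R x))" for s
    by (rule smooth_map_dilate[OF X])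
  show "iter_partial js (\<lambda>x. X (s *\<^sub>R x)) = dilation_deriv X js 0 s" for js s
    by (simp add: fun_eq_iff iter_partial_dilate[OF X] dilation_deriv_def pow_deriv_0)
  show "((\<lambda>s. dilation_deriv X js m s x) has_vector_derivative dilation_deriv X js (Suc m) s x) (at s)" for js m s x
    unfolding dilation_deriv_def
    by (intro has_vector_derivative_leibniz_deriv has_real_derivative_pow_deriv has_vector_derivative_dir_deriv X)
  show "continuous_on UNIV (\<lambda>p. dilation_deriv X js m (fst p) (snd p))" for js m
    unfolding dilation_deriv_def
    by (rule continuous_on_leibniz_deriv[where G = "\<lambda>l s x. dir_deriv l js X x (s *\<^sub>R x)"])
      (intro continuous_on_pow_deriv continuous_on_dir_deriv X)+
qed

lemma dilation_deriv_at_0: "dilation_deriv X [] m 0 x = dir_deriv m [] X x 0"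
  by (simp add: dilation_deriv_def leibniz_deriv_const pow_deriv_const)

section \<open>Polynomial vector fields\<close>

lemma poly_fun_const: "poly_fun (\<lambda>x::real^'n::finite. c)"
  unfolding poly_fun_def by (intro exI[of _ "{\<lambda>_. 0}"] exI[of _ "\<lambda>_. c"]) simp

lemma poly_fun_add:
  assumes "poly_fun f" "poly_fun g"
  shows "poly_fun (\<lambda>x. f x + g x)"
proof -
  obtain A a where A: "finite A" "f = (\<lambda>x. \<Sum>\<alpha>\<in>A. a \<alpha> * (\<Prod>i\<in>UNIV. (x $ i) ^ (\<alpha> i)))"
    using assms(1) unfolding poly_fun_def by blast
  obtain B b where B: "finite B" "g = (\<lambda>x. \<Sum>\<alpha>\<in>B. b \<alpha> * (\<Prod>i\<in>UNIV. (x $ i) ^ (\<alpha> i)))"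
    using assms(2) unfolding poly_fun_def by blast
  let ?a = "\<lambda>\<alpha>. if \<alpha> \<in> A then a \<alpha> else 0" and ?b = "\<lambda>\<alpha>. if \<alpha> \<in> B then b \<alpha> else 0"
  have "f x = (\<Sum>\<alpha>\<in>A \<union> B. ?a \<alpha> * (\<Prod>i\<in>UNIV. (x $ i) ^ (\<alpha> i)))"
    and "g x = (\<Sum>\<alpha>\<in>A \<union> B. ?b \<alpha> * (\<Prod>i\<in>UNIV. (x $ i) ^ (\<alpha> i)))" for x
    unfolding A(2) B(2) using A(1) B(1) by (auto intro: sum.mono_neutral_cong_left)
  then have "f x + g x = (\<Sum>\<alpha>\<in>A \<union> B. (?a \<alpha> + ?b \<alpha>) * (\<Prod>i\<in>UNIV. (x $ i) ^ (\<alpha> i)))" for x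
    by (simp add: sum.distrib distrib_right)
  with A(1) B(1) show ?thesis
    unfolding poly_fun_def by (intro exI[of _ "A \<union> B"] exI[of _ "\<lambda>\<alpha>. ?a \<alpha> + ?b \<alpha>"]) simp
qed

lemma poly_fun_sum: "finite S \<Longrightarrow> (\<And>s. s \<in> S \<Longrightarrow> poly_fun (f s)) \<Longrightarrow> poly_fun (\<lambda>x. \<Sum>s\<in>S. f s x)"
  by (induction S rule: finite_induct) (simp_all add: poly_fun_const poly_fun_add)

lemma poly_fun_mult_coord:
  assumes "poly_fun (f :: real^'n::finite \<Rightarrow> real)"
  shows "poly_fun (\<lambda>x. x $ i * f x)"
proof -
  obtain A a where A: "finite A" "f = (\<lambda>x. \<Sum>\<alpha>\<in>A. a \<alpha> * (\<Prod>i\<in>UNIV. (x $ i) ^ (\<alpha> i)))"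
    using assms unfolding poly_fun_def by blast
  define shift :: "('n \<Rightarrow> nat) \<Rightarrow> ('n \<Rightarrow> nat)" where "shift \<alpha> = \<alpha>(i := Suc (\<alpha> i))" for \<alpha>
  have unshift: "(shift \<alpha>)(i := shift \<alpha> i - 1) = \<alpha>" for \<alpha>
    by (simp add: shift_def)
  have inj: "inj_on shift A"
  proof (rule inj_onI)
    fix \<alpha> \<beta> assume "shift \<alpha> = shift \<beta>"
    then have "(shift \<alpha>)(i := shift \<alpha> i - 1) = (shift \<beta>)(i := shift \<beta> i - 1)" by simp
    then show "\<alpha> = \<beta>" by (simp only: unshift)
  qed
  have monomial: "(\<Prod>k\<in>UNIV. (x $ k) ^ (shift \<alpha> k)) = x $ i * (\<Prod>k\<in>UNIV. (x $ k) ^ (\<alpha> k))" for x \<alpha>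
  proof -
    have "(\<Prod>k\<in>UNIV. (x $ k) ^ (shift \<alpha> k)) = (\<Prod>k\<in>UNIV. (if k = i then x $ i else 1) * (x $ k) ^ (\<alpha> k))"
      by (rule prod.cong) (auto simp: shift_def)
    then show ?thesis by (simp add: prod.distrib)
  qed
  have eq: "(\<Sum>\<beta>\<in>shift ` A. a (\<beta>(i := \<beta> i - 1)) * (\<Prod>k\<in>UNIV. (x $ k) ^ (\<beta> k)))
      = x $ i * f x" for x
  proof -
    have "(\<Sum>\<beta>\<in>shift ` A. a (\<beta>(i := \<beta> i - 1)) * (\<Prod>k\<in>UNIV. (x $ k) ^ (\<beta> k)))
        = (\<Sum>\<alpha>\<in>A. a \<alpha> * (\<Prod>k\<in>UNIV. (x $ k) ^ (shift \<alpha> k)))"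
      by (simp only: sum.reindex[OF inj] o_def unshift)
    also have "\<dots> = (\<Sum>\<alpha>\<in>A. x $ i * (a \<alpha> * (\<Prod>k\<in>UNIV. (x $ k) ^ (\<alpha> k))))"
      by (rule sum.cong) (simp_all only: monomial mult.left_commute)
    also have "\<dots> = x $ i * f x"
      by (simp only: A(2) sum_distrib_left)
    finally show ?thesis .
  qed
  show ?thesis
    unfolding poly_fun_def
  proof (intro exI conjI)
    show "finite (shift ` A)" using A(1) by simp
    show "(\<lambda>x. x $ i * f x) = (\<lambda>x. \<Sum>\<beta>\<in>shift ` A. a (\<beta>(i := \<beta> i - 1)) * (\<Prod>k\<in>UNIV. (x $ k) ^ (\<beta> k)))"
      by (rule ext) (rule eq[symmetric])
  qed
qed

lemma smooth_map_poly_fun: "poly_fun f \<Longrightarrow> smooth_map f"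
proof -
  assume "poly_fun f"
  then obtain A a where A: "finite A" "f = (\<lambda>x. \<Sum>\<alpha>\<in>A. a \<alpha> * (\<Prod>i\<in>UNIV. (x $ i) ^ (\<alpha> i)))"
    unfolding poly_fun_def by blast
  have "smooth_map (\<lambda>x. (x $ i) ^ n)" for i n
    by (rule smooth_map_power[OF smooth_map_bounded_linear[OF bounded_linear_vec_nth]])
  then have "smooth_map (\<lambda>x. a \<alpha> * (\<Prod>i\<in>UNIV. (x $ i) ^ (\<alpha> i)))" for \<alpha>
    by (intro smooth_map_bilinear[OF bounded_bilinear_mult smooth_map_const] smooth_map_prod) auto
  then show "smooth_map f"
    unfolding A(2) by (intro smooth_map_sum A(1))
qed

lemma smooth_map_poly_vf:
  fixes X :: "real^'n::finite \<Rightarrow> real^'n"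
  assumes "poly_vf X"
  shows "smooth_map X"
proof -
  have X: "X = (\<lambda>x. \<Sum>j\<in>UNIV. (X x $ j) *\<^sub>R (axis j 1 :: real^'n))"
    by (simp add: fun_eq_iff) (metis (no_types) basis_expansion scalar_mult_eq_scaleR sum.cong)
  have "smooth_map (\<lambda>x. (X x $ j) *\<^sub>R (axis j 1 :: real^'n))" for j
    using assms unfolding poly_vf_def
    by (intro smooth_map_bilinear[OF bounded_bilinear_scaleR] smooth_map_poly_fun smooth_map_const) blast
  then show ?thesis
    by (subst X) (intro smooth_map_sum, simp_all)
qed

lemma poly_vf_dir_deriv: "poly_vf (\<lambda>x. dir_deriv m js X x y)"
proof -
  have "poly_fun (\<lambda>x. dir_deriv m js X x y $ j)" for j
  proof (induction m arbitrary: js)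
    case 0
    then show ?case by (simp add: poly_fun_const)
  next
    case (Suc m)
    have "poly_fun (\<lambda>x. \<Sum>i\<in>UNIV. x $ i * (dir_deriv m (i # js) X x y $ j))"
      by (intro poly_fun_sum poly_fun_mult_coord Suc.IH) simp
    then show ?case by simp
  qed
  then show ?thesis unfolding poly_vf_def by blast
qed

lemma dir_deriv_homogeneous: "dir_deriv m js X (t *\<^sub>R x) y = t ^ m *\<^sub>R dir_deriv m js X x y"
  by (induction m arbitrary: js) (simp_all add: scaleR_sum_right mult_ac)

lemma homog_vf_dir_deriv: "homog_vf (int m - 1) (\<lambda>x. dir_deriv m js X x 0)"
  unfolding homog_vf_def
proof (intro allI impI)
  fix t :: real assume t: "t > 0"
  then have "t powr (of_int (int m - 1)) = t ^ m / t"
    by (simp add: powr_diff powr_realpow)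
  then show "pull_vf t (\<lambda>x. dir_deriv m js X x 0) = (\<lambda>x. t powr (of_int (int m - 1)) *\<^sub>R dir_deriv m js X x 0)"
    unfolding pull_vf_def by (simp add: dir_deriv_homogeneous divide_inverse mult.commute)
qed

section \<open>The filtration\<close>

lemma pull_cochain_homog_vf:
  assumes c: "cochain q c" and Xs: "\<And>i. i < q \<Longrightarrow> smooth_map (Xs i)"
    and homog: "\<And>i. i < q \<Longrightarrow> homog_vf (d i) (Xs i)" and t: "t > 0"
  shows "pull_cochain t c Xs = t powr (\<Sum>i<q. d i) * c Xs"
proof -
  have "pull_cochain t c Xs = c (\<lambda>i x. (t powr d i) *\<^sub>R Xs i x)"
    unfolding pull_cochain_def using homog t by (intro cochain_cong[OF c]) (simp add: homog_vf_def)
  also have "\<dots> = (\<Prod>i<q. t powr d i) * c Xs"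
    by (rule cochain_scaleR[OF c Xs])
  finally show ?thesis
    using t by (simp add: powr_sum)
qed

lemma filt_vanishes_below:
  assumes F: "filt k q c" and Xs: "\<And>i. i < q \<Longrightarrow> poly_vf (Xs i) \<and> homog_vf (d i) (Xs i)"
    and deg: "(\<Sum>i<q. d i) < k"
  shows "c Xs = 0"
proof -
  have c: "cochain q c"
    using F by (simp add: filt_def)
  have smooth: "\<And>i. i < q \<Longrightarrow> smooth_map (Xs i)"
    using Xs smooth_map_poly_vf by blast
  then obtain L where L: "((\<lambda>t. t powr (- of_int k) * pull_cochain t c Xs) \<longlongrightarrow> L) (at_right 0)"
    using F unfolding filt_def smooth_vf_iff_smooth_map by blast
  define e :: real where "e = of_int (k - (\<Sum>i<q. d i))"
  have "e > 0" using deg by (simp add: e_def del: of_int_sum)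
  then have "((\<lambda>t. t powr e * (t powr (- of_int k) * pull_cochain t c Xs)) \<longlongrightarrow> 0 * L) (at_right 0)"
    by (intro tendsto_mult[OF _ L] tendsto_zero_powrI tendsto_ident_at)
      (auto simp: eventually_at_right_field intro!: exI[of _ 1])
  moreover have "t powr e * (t powr (- of_int k) * pull_cochain t c Xs) = c Xs" if t: "t > 0" for t
  proof -
    have "i < q \<Longrightarrow> homog_vf (d i) (Xs i)" for i
      using Xs by blast
    from pull_cochain_homog_vf[OF c smooth this t]
    have "pull_cochain t c Xs = t powr (\<Sum>i<q. d i) * c Xs" .
    then show ?thesis
      using t by (simp add: e_def mult.assoc[symmetric] powr_add[symmetric])
  qed
  then have "\<forall>\<^sub>F t in at_right 0. t powr e * (t powr (- of_int k) * pull_cochain t c Xs) = c Xs"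
    using eventually_at_right_less by (rule eventually_mono[rotated])
  ultimately have "((\<lambda>t. c Xs) \<longlongrightarrow> 0) (at_right (0::real))"
    using Lim_transform_eventually by fastforce
  then show "c Xs = 0"
    using tendsto_unique[OF trivial_limit_at_right_real tendsto_const] by blast
qed

lemma tendsto_at_right_0_div_power:
  fixes P :: "nat \<Rightarrow> real \<Rightarrow> real"
  assumes der: "\<And>m t. (P m has_real_derivative P (Suc m) t) (at t)" and vanish: "\<And>m. m < M \<Longrightarrow> P m 0 = 0"
  shows "((\<lambda>t. P 0 t / t ^ M) \<longlongrightarrow> P M 0 / fact M) (at_right 0)"
proof (cases "M = 0")
  case True
  then show ?thesis
    using DERIV_isCont[OF der] filterlim_at_split unfolding isCont_def by fastforce
next
  case False
  have "\<exists>\<xi>. 0 < \<xi> \<and> \<xi> < t \<and> P 0 t / t ^ M = P M \<xi> / fact M" if t: "t > 0" for t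
  proof -
    obtain \<xi> where \<xi>: "0 < \<xi>" "\<xi> < t"
      and "P 0 t = (\<Sum>m<M. P m 0 / fact m * t ^ m) + P M \<xi> / fact M * t ^ M"
      using Maclaurin[OF t, of M P "P 0"] False der by auto
    moreover have "(\<Sum>m<M. P m 0 / fact m * t ^ m) = 0"
      by (simp add: vanish)
    ultimately show ?thesis
      using t by auto
  qed
  then obtain \<xi> where \<xi>: "\<And>t. t > 0 \<Longrightarrow> 0 < \<xi> t \<and> \<xi> t < t \<and> P 0 t / t ^ M = P M (\<xi> t) / fact M"
    by metis
  have "(\<xi> \<longlongrightarrow> 0) (at_right 0)"
  proof (rule tendsto_sandwich[of "\<lambda>_. 0" _ _ "\<lambda>t. t"])
    show "\<forall>\<^sub>F t in at_right 0. 0 \<le> \<xi> t"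
      using eventually_at_right_less by (rule eventually_mono) (simp add: \<xi> less_imp_le)
    show "\<forall>\<^sub>F t in at_right 0. \<xi> t \<le> t"
      using eventually_at_right_less by (rule eventually_mono) (simp add: \<xi> less_imp_le)
  qed (simp_all add: tendsto_ident_at)
  from isCont_tendsto_compose[OF DERIV_isCont[OF der] this]
  have "((\<lambda>t. P M (\<xi> t) / fact M) \<longlongrightarrow> P M 0 / fact M) (at_right 0)"
    by (rule tendsto_divide[OF _ tendsto_const]) simp
  moreover have "\<forall>\<^sub>F t in at_right 0. P M (\<xi> t) / fact M = P 0 t / t ^ M"
    using eventually_at_right_less by (rule eventually_mono) (simp add: \<xi>)
  ultimately show ?thesis
    by (rule Lim_transform_eventually)
qed

lemma pull_cochain_eq_dilate:
  assumes c: "cochain q c" and Xs: "\<And>i. i < q \<Longrightarrow> smooth_map (Xs i)"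
  shows "pull_cochain t c Xs = (1 / t) ^ q * c (\<lambda>i x. Xs i (t *\<^sub>R x))"
  using cochain_scaleR[OF c, of "\<lambda>i x. Xs i (t *\<^sub>R x)" "\<lambda>_. 1 / t"] smooth_map_dilate[OF Xs]
  by (simp add: pull_cochain_def pull_vf_def)

lemma powr_of_int_eq_power_divide:
  fixes t :: real
  assumes t: "t > 0"
  shows "t powr of_int z = t ^ nat z / t ^ nat (- z)"
proof -
  have "t powr of_int z = t powr (real (nat z) - real (nat (- z)))"
    by (rule arg_cong[where f = "(powr) t"]) linarith
  also have "\<dots> = t ^ nat z / t ^ nat (- z)"
    using t by (simp add: powr_diff powr_realpow)
  finally show ?thesis .
qed

lemma cochain_deriv_dilation_eq_0:
  fixes c :: "(nat \<Rightarrow> real^'n::finite \<Rightarrow> real^'n) \<Rightarrow> real"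
  assumes V: "\<And>Xs (d :: nat \<Rightarrow> int). (\<And>i. i < q \<Longrightarrow> poly_vf (Xs i) \<and> homog_vf (d i) (Xs i)) \<Longrightarrow>
      (\<Sum>i<q. d i) < k \<Longrightarrow> c Xs = 0"
    and m: "int m < k + int q"
  shows "cochain_deriv c q (\<lambda>i. dilation_deriv (Xs i)) m (\<lambda>_. 0) 0 = 0"
proof (rule cochain_deriv_eq_0)
  fix a :: "nat \<Rightarrow> nat" assume a: "int (\<Sum>i<q. a i) - int q < k"
  have "dilation_deriv (Xs i) [] (a i) 0 = (\<lambda>x. dir_deriv (a i) [] (Xs i) x 0)" for i
    by (simp add: fun_eq_iff dilation_deriv_at_0)
  moreover have "(\<Sum>i<q. int (a i) - 1) < k"
    using a by (simp add: sum_subtractf)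
  ultimately show "c (\<lambda>i. dilation_deriv (Xs i) [] (a i) 0) = 0"
    by (intro V[of _ "\<lambda>i. int (a i) - 1"]) (simp_all add: poly_vf_dir_deriv homog_vf_dir_deriv)
qed (use m in simp)

lemma pull_cochain_eq_cochain_deriv_dilation:
  fixes c :: "(nat \<Rightarrow> real^'n::finite \<Rightarrow> real^'n) \<Rightarrow> real"
  assumes c: "cochain q c" and Xs: "\<And>i. i < q \<Longrightarrow> smooth_map (Xs i)" and t: "t > 0"
  shows "t powr (- of_int k) * pull_cochain t c Xs = t ^ nat (- (k + int q))
    * (cochain_deriv c q (\<lambda>i. dilation_deriv (Xs i)) 0 (\<lambda>_. 0) t / t ^ nat (k + int q))"
proof -
  have "dilation_deriv (Xs i) [] 0 t = (\<lambda>x. Xs i (t *\<^sub>R x))" for i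
    by (simp add: fun_eq_iff dilation_deriv_def pow_deriv_0)
  then have "t powr (- of_int k) * pull_cochain t c Xs
      = t powr (- of_int k) * (1 / t) ^ q * cochain_deriv c q (\<lambda>i. dilation_deriv (Xs i)) 0 (\<lambda>_. 0) t"
    by (simp add: pull_cochain_eq_dilate[OF c Xs])
  also have "t powr (- of_int k) * (1 / t) ^ q = t powr (- of_int k - real q)"
    by (simp only: powr_diff powr_realpow[OF t] power_one_over divide_inverse mult_1_left power_inverse)
  also have "\<dots> = t powr of_int (- (k + int q))"
    by simp
  also have "\<dots> = t ^ nat (- (k + int q)) / t ^ nat (k + int q)"
    using powr_of_int_eq_power_divide[OF t, of "- (k + int q)"] unfolding minus_minus .
  finally show ?thesis
    by simp
qed

lemma filt_if_vanishes_below: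
  fixes c :: "(nat \<Rightarrow> real^'n::finite \<Rightarrow> real^'n) \<Rightarrow> real"
  assumes c: "cochain q c"
    and V: "\<And>Xs (d :: nat \<Rightarrow> int). (\<And>i. i < q \<Longrightarrow> poly_vf (Xs i) \<and> homog_vf (d i) (Xs i)) \<Longrightarrow>
      (\<Sum>i<q. d i) < k \<Longrightarrow> c Xs = 0"
  shows "filt k q c"
  unfolding filt_def
proof (intro conjI allI impI c)
  fix Xs :: "nat \<Rightarrow> real^'n \<Rightarrow> real^'n" assume "\<forall>i<q. smooth_vf (Xs i)"
  then have smooth: "\<And>i. i < q \<Longrightarrow> smooth_map (Xs i)"
    by (simp add: smooth_vf_iff_smooth_map)
  define P where "P m = cochain_deriv c q (\<lambda>i. dilation_deriv (Xs i)) m (\<lambda>_. 0)" for m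
  define M where "M = nat (k + int q)"
  define e where "e = nat (- (k + int q))"
  have "(P m has_real_derivative P (Suc m) t) (at t)" for m t
    unfolding P_def by (rule has_real_derivative_cochain_deriv[OF c smooth_family_dilation[OF smooth]])
  moreover have "P m 0 = 0" if "m < M" for m
    using that unfolding P_def M_def by (intro cochain_deriv_dilation_eq_0[OF V]) auto
  ultimately have "((\<lambda>t. t ^ e * (P 0 t / t ^ M)) \<longlongrightarrow> 0 ^ e * (P M 0 / fact M)) (at_right 0)"
    by (intro tendsto_mult tendsto_power tendsto_ident_at tendsto_at_right_0_div_power[where P = P])
  moreover have "\<forall>\<^sub>F t in at_right 0. t ^ e * (P 0 t / t ^ M) = t powr (- of_int k) * pull_cochain t c Xs"
    using eventually_at_right_less
    by (rule eventually_mono) (simp add: pull_cochain_eq_cochain_deriv_dilation[OF c smooth] P_def M_def e_def)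
  ultimately show "\<exists>L. ((\<lambda>t. t powr (- of_int k) * pull_cochain t c Xs) \<longlongrightarrow> L) (at_right 0)"
    by (intro exI) (rule Lim_transform_eventually)
qed

theorem lemma3p6:
  fixes c :: "(nat \<Rightarrow> real^'n::finite \<Rightarrow> real^'n) \<Rightarrow> real"
    and q :: nat and k :: int
  assumes "q > 0" and "cochain q c"
  shows "filt k q c \<longleftrightarrow>
    (\<forall>Xs (d :: nat \<Rightarrow> int).
       (\<forall>i<q. poly_vf (Xs i) \<and> homog_vf (d i) (Xs i)) \<and> (\<Sum>i<q. d i) < k
       \<longrightarrow> c Xs = 0)"
  using filt_vanishes_below[of k q c] filt_if_vanishes_below[OF assms(2), of k] by blast

end
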